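(* Assume $\eta_{(i)}=\tau_{(i)}-1_K$ for all $i\in\Omega$, and let $Y\subseteq\Omega$. Then: (1) for any $D\subseteq\max(Y)$, $\displaystyle\pi(Y,D)=\sum_{A\subseteq D}(-1)^{|A|}\Big(\prod_{i\in\langle A\rangle_Y}\tau_{(i)}x\Big)\pi(Y-\langle A\rangle_Y,\emptyset)$; (2) for any $D\subseteq\max(Y)$, $\displaystyle\Big(\prod_{i\in\langle D\rangle_Y}\tau_{(i)}x\Big)\pi(Y-\langle D\rangle_Y,\emptyset)=\sum_{A\subseteq D}(-1)^{|A|}\pi(Y,A)$.
   Context: $\Omega$ is a finite set and $\mathbf{P}=(\Omega,\preccurlyeq_{\mathbf{P}})$ a poset. For $Y\subseteq\Omega$: $\max(Y)$ is the set of maximal elements of $Y$ w.r.t. $\preccurlyeq_{\mathbf{P}}$; $\mathcal{I}(Y)$ is the set of down-closed subsets of $Y$ (with the induced order); for $A\subseteq Y$, $\langle A\rangle_Y=\{y\in Y:\exists a\in A, y\preccurlyeq_{\mathbf{P}}a\}$. $K$ is a commutative ring, $\tau,\eta\in K^{\Omega}$. For $D,I\subseteq\Omega$, $\varphi(D,I)=(-1)^{|I\cap D|}\big(\prod_{i\in I-\max(I)}\tau_{(i)}\big)\big(\prod_{i\in\max(I)-D}\eta_{(i)}\big)$ if $I\cap D\subseteq\max(I)$, and $0$ otherwise. For $D\subseteq Y\subseteq\Omega$, $\pi(Y,D)=\sum_{I\in\mathcal{I}(Y)}\varphi(D,I)x^{|I|}\in K[x]$. The expression $\prod_{i\in S}\tau_{(i)}x$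 means $\prod_{i\in S}(\tau_{(i)}x)$. *)

theory Defs
  imports "HOL-Computational_Algebra.Polynomial"
begin

definition poset_on :: "'a set \<Rightarrow> ('a \<Rightarrow> 'a \<Rightarrow> bool) \<Rightarrow> bool" where
  "poset_on Om le \<longleftrightarrow> finite Om \<and>
     (\<forall>x\<in>Om. le x x) \<and>
     (\<forall>x\<in>Om. \<forall>y\<in>Om. le x y \<and> le y x \<longrightarrow> x = y) \<and>
     (\<forall>x\<in>Om. \<forall>y\<in>Om. \<forall>z\<in>Om. le x y \<and> le y z \<longrightarrow> le x z)"

definition maxel :: "('a \<Rightarrow> 'a \<Rightarrow> bool) \<Rightarrow> 'a set \<Rightarrow> 'a set" where
  "maxel le Y = {y\<in>Y. \<forall>z\<in>Y. le y z \<longrightarrow> z = y}"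

definition downsets :: "('a \<Rightarrow> 'a \<Rightarrow> bool) \<Rightarrow> 'a set \<Rightarrow> 'a set set" where
  "downsets le Y = {I. I \<subseteq> Y \<and> (\<forall>i\<in>I. \<forall>y\<in>Y. le y i \<longrightarrow> y \<in> I)}"

definition gen :: "('a \<Rightarrow> 'a \<Rightarrow> bool) \<Rightarrow> 'a set \<Rightarrow> 'a set \<Rightarrow> 'a set" where
  "gen le Y A = {y\<in>Y. \<exists>a\<in>A. le y a}"

definition phi :: "('a \<Rightarrow> 'a \<Rightarrow> bool) \<Rightarrow> ('a \<Rightarrow> 'b::comm_ring_1) \<Rightarrow> ('a \<Rightarrow> 'b)
    \<Rightarrow> 'a set \<Rightarrow> 'a set \<Rightarrow> 'b" where
  "phi le tau eta D I =
     (if I \<inter> D \<subseteq> maxel le I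
      then (-1) ^ card (I \<inter> D) * (\<Prod>i\<in>I - maxel le I. tau i) * (\<Prod>i\<in>maxel le I - D. eta i)
      else 0)"

definition pi_poly :: "('a \<Rightarrow> 'a \<Rightarrow> bool) \<Rightarrow> ('a \<Rightarrow> 'b::comm_ring_1) \<Rightarrow> ('a \<Rightarrow> 'b)
    \<Rightarrow> 'a set \<Rightarrow> 'a set \<Rightarrow> 'b poly" where
  "pi_poly le tau eta Y D = (\<Sum>I\<in>downsets le Y. monom (phi le tau eta D I) (card I))"

end

theory Submission
  imports Defs
begin

text \<open>
  For A \<subseteq> max(Y), the map J \<mapsto> J \<union> \<langle>A\<rangle>_Y is a bijection from the down-sets of
  Y - \<langle>A\<rangle>_Y onto the down-sets of Y containing A, and the maximal elements of
  J \<union> \<langle>A\<rangle>_Y are A \<union> max(J). Hence (\<Prod>i\<in>\<langle>A\<rangle>_Y. \<tau>_i x) \<pi>(Y - \<langle>A\<rangle>_Y, \<emptyset>) is a sum over the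
  down-sets I \<supseteq> A of Y, in which the elements of A are weighted by \<tau> and the remaining
  maximal elements of I by \<eta>. Exchanging the two sums on the right of (1), the coefficient
  of a down-set I becomes an alternating sum over A \<subseteq> I \<inter> D; since \<eta> = \<tau> - 1 on D it is
  the expansion of \<Prod>i\<in>I \<inter> D. (\<eta>_i - \<tau>_i) = (-1)^|I \<inter> D| and collapses to \<phi>(D, I).
  Identity (2) is the Moebius inversion of (1) on the Boolean lattice of subsets of D.
\<close>

lemma prod_linear_pCons_eq_monom:
  fixes t :: "'a \<Rightarrow> 'b::comm_semiring_1"
  assumes "finite G"
  shows "(\<Prod>i\<in>G. [:0, t i:]) = monom (\<Prod>i\<in>G. t i) (card G)"
  using assms
proof (induction G rule: finite_induct)
  case (insert x F)
  have "[:0, t x:] = monom (t x) 1" by (simp add: monom_Suc monom_0)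
  with insert show ?case by (simp add: mult_monom)
qed simp

lemma neg_one_power_mult_monom:
  "(- 1 :: 'b::comm_ring_1 poly) ^ n * monom c k = monom ((- 1) ^ n * c) k"
proof -
  have "(- 1 :: 'b poly) = monom (- 1) 0"
    by (simp add: monom_0 one_pCons)
  then have "(- 1 :: 'b poly) ^ n = monom ((- 1) ^ n) 0"
    by (simp add: monom_power)
  then show ?thesis by (simp add: mult_monom)
qed

lemma sum_Pow_neg_one_power_prod_times_prod:
  fixes tau eta :: "'a \<Rightarrow> 'b::comm_ring_1"
  assumes "finite M" "S \<subseteq> M" "\<forall>i\<in>S. eta i = tau i - 1"
  shows "(\<Sum>A\<in>Pow S. (- 1) ^ card A * ((\<Prod>i\<in>A. tau i) * (\<Prod>i\<in>M - A. eta i)))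
         = (- 1) ^ card S * (\<Prod>i\<in>M - S. eta i)"
proof -
  have "finite S" using assms finite_subset by blast
  have "(- 1) ^ card A * ((\<Prod>i\<in>A. tau i) * (\<Prod>i\<in>M - A. eta i))
      = (\<Prod>i\<in>M - S. eta i) * ((\<Prod>i\<in>A. - tau i) * (\<Prod>i\<in>S - A. eta i))" if "A \<subseteq> S" for A
  proof -
    have "M - A = (M - S) \<union> (S - A)" using that assms(2) by blast
    then have "(\<Prod>i\<in>M - A. eta i) = (\<Prod>i\<in>M - S. eta i) * (\<Prod>i\<in>S - A. eta i)"
      using assms(1) \<open>finite S\<close> by (simp only:) (rule prod.union_disjoint, auto)
    then show ?thesis by (simp add: prod_uminus algebra_simps)
  qed
  then have "(\<Sum>A\<in>Pow S. (- 1) ^ card A * ((\<Prod>i\<in>A. tau i) * (\<Prod>i\<in>M - A. eta i)))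
      = (\<Prod>i\<in>M - S. eta i) * (\<Sum>A\<in>Pow S. (\<Prod>i\<in>A. - tau i) * (\<Prod>i\<in>S - A. eta i))"
    by (simp add: sum_distrib_left)
  also have "\<dots> = (\<Prod>i\<in>M - S. eta i) * (\<Prod>i\<in>S. - tau i + eta i)"
    by (simp only: prod_add[OF \<open>finite S\<close>])
  also have "\<dots> = (\<Prod>i\<in>M - S. eta i) * (\<Prod>i\<in>S. - 1)"
    using assms(3) by simp
  finally show ?thesis by (simp add: mult.commute)
qed

lemma downsets_subset_Pow: "downsets le Y \<subseteq> Pow Y"
  unfolding downsets_def by blast

lemma finite_downsets: "finite Y \<Longrightarrow> finite (downsets le Y)"
  using downsets_subset_Pow by (rule finite_subset) simp

lemma maxel_subset: "maxel le Y \<subseteq> Y"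
  unfolding maxel_def by blast

lemma gen_subset: "gen le Y A \<subseteq> Y"
  unfolding gen_def by blast

lemma gen_subset_downset: "I \<in> downsets le Y \<Longrightarrow> A \<subseteq> I \<Longrightarrow> gen le Y A \<subseteq> I"
  unfolding gen_def downsets_def by blast

lemma Diff_gen_in_downsets:
  "I \<in> downsets le Y \<Longrightarrow> I - gen le Y A \<in> downsets le (Y - gen le Y A)"
  unfolding downsets_def by blast

lemma downset_Int_maxel_subset: "I \<in> downsets le Y \<Longrightarrow> I \<inter> maxel le Y \<subseteq> maxel le I"
  unfolding downsets_def maxel_def by blast

lemma phi_empty:
  "phi le tau eta {} I = (\<Prod>i\<in>I - maxel le I. tau i) * (\<Prod>i\<in>maxel le I. eta i)"
  by (simp add: phi_def)

definition marked_weight :: "('a \<Rightarrow> 'a \<Rightarrow> bool) \<Rightarrow> ('a \<Rightarrow> 'b::comm_ring_1) \<Rightarrow> ('a \<Rightarrow> 'b)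
    \<Rightarrow> 'a set \<Rightarrow> 'a set \<Rightarrow> 'b" where
  "marked_weight le tau eta A I =
     (\<Prod>i\<in>I - maxel le I. tau i) * ((\<Prod>i\<in>A. tau i) * (\<Prod>i\<in>maxel le I - A. eta i))"

lemma phi_eq_sum_Pow_marked_weight:
  fixes tau eta :: "'a \<Rightarrow> 'b::comm_ring_1"
  assumes "finite I" "I \<inter> D \<subseteq> maxel le I" "\<forall>i\<in>D. eta i = tau i - 1"
  shows "phi le tau eta D I = (\<Sum>A\<in>Pow (I \<inter> D). (- 1) ^ card A * marked_weight le tau eta A I)"
proof -
  have "(\<Sum>A\<in>Pow (I \<inter> D). (- 1) ^ card A * marked_weight le tau eta A I)
      = (\<Prod>i\<in>I - maxel le I. tau i)
        * (\<Sum>A\<in>Pow (I \<inter> D). (- 1) ^ card A * ((\<Prod>i\<in>A. tau i) * (\<Prod>i\<in>maxel le I - A. eta i)))"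
    by (simp only: marked_weight_def sum_distrib_left mult.left_commute)
  also have "\<dots> = (\<Prod>i\<in>I - maxel le I. tau i)
      * ((- 1) ^ card (I \<inter> D) * (\<Prod>i\<in>maxel le I - I \<inter> D. eta i))"
    using assms
    by (subst sum_Pow_neg_one_power_prod_times_prod) (auto intro: finite_subset[OF maxel_subset])
  also have "\<dots> = phi le tau eta D I"
  proof -
    have "maxel le I - I \<inter> D = maxel le I - D" using maxel_subset[of le I] by blast
    with assms(2) show ?thesis by (simp add: phi_def Int_commute ac_simps)
  qed
  finally show ?thesis ..
qed

locale finite_preorder_on =
  fixes le :: "'a \<Rightarrow> 'a \<Rightarrow> bool" and Y :: "'a set"
  assumes finite_Y: "finite Y" and reflp_on_Y: "reflp_on Y le" and transp_on_Y: "transp_on Y le"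
begin

lemma subset_gen: "A \<subseteq> Y \<Longrightarrow> A \<subseteq> gen le Y A"
  using reflp_on_Y unfolding gen_def reflp_on_def by blast

lemma Un_gen_in_downsets:
  assumes "A \<subseteq> Y" "J \<in> downsets le (Y - gen le Y A)"
  shows "J \<union> gen le Y A \<in> downsets le Y"
  using assms transp_on_Y unfolding downsets_def gen_def transp_on_def by blast

lemma maxel_Un_gen_subset:
  assumes A: "A \<subseteq> maxel le Y"
  shows "maxel le (J \<union> gen le Y A) \<subseteq> A \<union> maxel le J"
proof
  fix x
  assume x: "x \<in> maxel le (J \<union> gen le Y A)"
  show "x \<in> A \<union> maxel le J"
  proof (cases "x \<in> gen le Y A")
    case True
    then obtain a where a: "a \<in> A" "le x a" unfolding gen_def by blast
    have "A \<subseteq> gen le Y A" using A maxel_subset[of le Y] subset_gen by (meson subset_trans)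
    with x a have "a = x" unfolding maxel_def by blast
    with a show ?thesis by blast
  next
    case False
    with x have "x \<in> J" unfolding maxel_def by blast
    with x show ?thesis unfolding maxel_def by blast
  qed
qed

lemma subset_maxel_Un_gen:
  assumes A: "A \<subseteq> maxel le Y" and J: "J \<subseteq> Y - gen le Y A"
  shows "A \<union> maxel le J \<subseteq> maxel le (J \<union> gen le Y A)"
proof
  have AY: "A \<subseteq> Y" using A maxel_subset[of le Y] by (rule subset_trans)
  fix x
  assume "x \<in> A \<union> maxel le J"
  then show "x \<in> maxel le (J \<union> gen le Y A)"
  proof
    assume xA: "x \<in> A"
    have "z = x" if "z \<in> J \<union> gen le Y A" "le x z" for z
    proof -
      have "z \<in> Y" using that(1) J gen_subset[of le Y A] by blast
      moreover have "x \<in> maxel le Y" using xA A by blast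
      ultimately show ?thesis using that(2) unfolding maxel_def by blast
    qed
    with xA subset_gen[OF AY] show ?thesis unfolding maxel_def by blast
  next
    assume x: "x \<in> maxel le J"
    have "z = x" if z: "z \<in> J \<union> gen le Y A" "le x z" for z
    proof (cases "z \<in> gen le Y A")
      case True
      then obtain a where a: "a \<in> A" "le z a" "z \<in> Y" unfolding gen_def by blast
      have "x \<in> Y" "x \<notin> gen le Y A" using x J unfolding maxel_def by blast+
      moreover have "le x a" using a z(2) AY \<open>x \<in> Y\<close> transp_on_Y unfolding transp_on_def by blast
      ultimately show ?thesis using a unfolding gen_def by blast
    next
      case False
      with x z show ?thesis unfolding maxel_def by blast
    qed
    with x show ?thesis unfolding maxel_def by blast
  qed
qed

lemma maxel_Un_gen:
  "A \<subseteq> maxel le Y \<Longrightarrow> J \<subseteq> Y - gen le Y A \<Longrightarrow> maxel le (J \<union> gen le Y A) = A \<union> maxel le J"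
  using maxel_Un_gen_subset subset_maxel_Un_gen by (rule equalityI)

lemma bij_betw_Un_gen:
  assumes "A \<subseteq> Y"
  shows "bij_betw (\<lambda>J. J \<union> gen le Y A) (downsets le (Y - gen le Y A)) {I \<in> downsets le Y. A \<subseteq> I}"
proof (rule bij_betw_byWitness[where f' = "\<lambda>I. I - gen le Y A"])
  show "\<forall>J\<in>downsets le (Y - gen le Y A). J \<union> gen le Y A - gen le Y A = J"
    unfolding downsets_def by blast
  show "\<forall>I\<in>{I \<in> downsets le Y. A \<subseteq> I}. I - gen le Y A \<union> gen le Y A = I"
    using gen_subset_downset[of _ le Y A] by blast
  show "(\<lambda>J. J \<union> gen le Y A) ` downsets le (Y - gen le Y A) \<subseteq> {I \<in> downsets le Y. A \<subseteq> I}"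
    using Un_gen_in_downsets[OF assms] subset_gen[OF assms] by blast
  show "(\<lambda>I. I - gen le Y A) ` {I \<in> downsets le Y. A \<subseteq> I} \<subseteq> downsets le (Y - gen le Y A)"
    using Diff_gen_in_downsets[of _ le Y A] by blast
qed

lemma prod_gen_pi_poly_eq_sum_downsets:
  fixes tau eta :: "'a \<Rightarrow> 'b::comm_ring_1"
  assumes A: "A \<subseteq> maxel le Y"
  shows "(\<Prod>i\<in>gen le Y A. [:0, tau i:]) * pi_poly le tau eta (Y - gen le Y A) {}
    = (\<Sum>I | I \<in> downsets le Y \<and> A \<subseteq> I. monom (marked_weight le tau eta A I) (card I))"
proof -
  let ?G = "gen le Y A"
  have AY: "A \<subseteq> Y" using A maxel_subset[of le Y] by (rule subset_trans)
  have AG: "A \<subseteq> ?G" using subset_gen[OF AY] .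
  have fin_G: "finite ?G" using gen_subset[of le Y A] finite_Y by (rule finite_subset)
  have "monom (\<Prod>i\<in>?G. tau i) (card ?G) * monom (phi le tau eta {} J) (card J)
      = monom (marked_weight le tau eta A (J \<union> ?G)) (card (J \<union> ?G))"
    if J: "J \<in> downsets le (Y - ?G)" for J
  proof -
    have JY: "J \<subseteq> Y - ?G" using J unfolding downsets_def by blast
    have fin_J: "finite J" using finite_Y JY by (meson finite_Diff finite_subset)
    have maxel_J: "maxel le J \<subseteq> J" by (rule maxel_subset)
    have maxel_JG: "maxel le (J \<union> ?G) = A \<union> maxel le J" using maxel_Un_gen[OF A JY] .
    have "J \<union> ?G - maxel le (J \<union> ?G) = (?G - A) \<union> (J - maxel le J)"
      using maxel_JG JY AG maxel_J by blast
    moreover have "(\<Prod>i\<in>(?G - A) \<union> (J - maxel le J). tau i)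
        = (\<Prod>i\<in>?G - A. tau i) * (\<Prod>i\<in>J - maxel le J. tau i)"
      by (rule prod.union_disjoint) (use fin_G fin_J JY in auto)
    ultimately have "(\<Prod>i\<in>J \<union> ?G - maxel le (J \<union> ?G). tau i) * (\<Prod>i\<in>A. tau i)
        = (\<Prod>i\<in>?G. tau i) * (\<Prod>i\<in>J - maxel le J. tau i)"
      by (simp add: prod.subset_diff[OF AG fin_G] algebra_simps)
    moreover have "maxel le (J \<union> ?G) - A = maxel le J" using maxel_JG JY AG maxel_J by blast
    ultimately have "marked_weight le tau eta A (J \<union> ?G) = (\<Prod>i\<in>?G. tau i) * phi le tau eta {} J"
      by (simp add: marked_weight_def phi_empty flip: mult.assoc)
    moreover have "card (J \<union> ?G) = card ?G + card J"
      using fin_J fin_G JY by (subst card_Un_disjoint) auto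
    ultimately show ?thesis by (simp add: mult_monom)
  qed
  then have "(\<Prod>i\<in>?G. [:0, tau i:]) * pi_poly le tau eta (Y - ?G) {}
      = (\<Sum>J\<in>downsets le (Y - ?G). monom (marked_weight le tau eta A (J \<union> ?G)) (card (J \<union> ?G)))"
    unfolding pi_poly_def prod_linear_pCons_eq_monom[OF fin_G] sum_distrib_left by simp
  also have "\<dots> = (\<Sum>I | I \<in> downsets le Y \<and> A \<subseteq> I. monom (marked_weight le tau eta A I) (card I))"
    using sum.reindex_bij_betw[OF bij_betw_Un_gen[OF AY]] by simp
  finally show ?thesis .
qed

lemma pi_poly_eq_alternating_sum:
  fixes tau eta :: "'a \<Rightarrow> 'b::comm_ring_1"
  assumes D: "D \<subseteq> maxel le Y" and eta: "\<forall>i\<in>D. eta i = tau i - 1"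
  shows "pi_poly le tau eta Y D = (\<Sum>A | A \<subseteq> D. (- 1) ^ card A *
    (\<Prod>i\<in>gen le Y A. [:0, tau i:]) * pi_poly le tau eta (Y - gen le Y A) {})"
proof -
  let ?t = "\<lambda>A I. monom ((- 1) ^ card A * marked_weight le tau eta A I) (card I)"
  have fin_D: "finite D" using D maxel_subset[of le Y] finite_Y by (meson finite_subset)
  have "(\<Sum>A | A \<subseteq> D. (- 1) ^ card A *
      (\<Prod>i\<in>gen le Y A. [:0, tau i:]) * pi_poly le tau eta (Y - gen le Y A) {})
    = (\<Sum>A\<in>Pow D. \<Sum>I | I \<in> downsets le Y \<and> A \<subseteq> I. ?t A I)"
    unfolding Pow_def using D
    by (intro sum.cong refl)
      (auto simp: mult.assoc prod_gen_pi_poly_eq_sum_downsets sum_distrib_left neg_one_power_mult_monom)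
  also have "\<dots> = (\<Sum>I\<in>downsets le Y. \<Sum>A | A \<in> Pow D \<and> A \<subseteq> I. ?t A I)"
    using fin_D finite_Y by (intro sum.swap_restrict finite_Pow_iff[THEN iffD2] finite_downsets)
  also have "\<dots> = (\<Sum>I\<in>downsets le Y. monom (phi le tau eta D I) (card I))"
  proof (rule sum.cong[OF refl])
    fix I
    assume I: "I \<in> downsets le Y"
    have "finite I" using I downsets_subset_Pow finite_Y by (meson PowD finite_subset subsetD)
    moreover have "I \<inter> D \<subseteq> maxel le I" using downset_Int_maxel_subset[OF I] D by blast
    moreover have "{A. A \<in> Pow D \<and> A \<subseteq> I} = Pow (I \<inter> D)" by blast
    ultimately show "(\<Sum>A | A \<in> Pow D \<and> A \<subseteq> I. ?t A I) = monom (phi le tau eta D I) (card I)"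
      using eta by (simp add: phi_eq_sum_Pow_marked_weight del: Pow_Int_eq flip: monom_sum)
  qed
  finally show ?thesis by (simp add: pi_poly_def)
qed

lemma prod_gen_pi_poly_eq_alternating_sum:
  fixes tau eta :: "'a \<Rightarrow> 'b::comm_ring_1"
  assumes D: "D \<subseteq> maxel le Y" and eta: "\<forall>i\<in>D. eta i = tau i - 1"
  shows "(\<Prod>i\<in>gen le Y D. [:0, tau i:]) * pi_poly le tau eta (Y - gen le Y D) {}
    = (\<Sum>A | A \<subseteq> D. (- 1) ^ card A * pi_poly le tau eta Y A)"
proof -
  define f where "f A = (\<Prod>i\<in>gen le Y A. [:0, tau i:]) * pi_poly le tau eta (Y - gen le Y A) {}" for A
  have fin_D: "finite D" using D maxel_subset[of le Y] finite_Y by (meson finite_subset)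
  have "f D = (\<Sum>A\<in>Pow D. (- 1) ^ card A * (\<Sum>B\<in>Pow A. (- 1) ^ card B * f B))"
    by (rule inclusion_exclusion_symmetric[where g = "\<lambda>A. \<Sum>B\<in>Pow A. (- 1) ^ card B * f B"])
      (use fin_D in simp_all)
  also have "\<dots> = (\<Sum>A\<in>Pow D. (- 1) ^ card A * pi_poly le tau eta Y A)"
  proof (rule sum.cong[OF refl])
    fix A
    assume "A \<in> Pow D"
    then have "A \<subseteq> maxel le Y" "\<forall>i\<in>A. eta i = tau i - 1" using D eta by auto
    then show "(- 1) ^ card A * (\<Sum>B\<in>Pow A. (- 1) ^ card B * f B) = (- 1) ^ card A * pi_poly le tau eta Y A"
      by (simp add: pi_poly_eq_alternating_sum f_def Pow_def mult.assoc)
  qed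
  finally show ?thesis by (simp add: f_def Pow_def)
qed

end

lemma poset_on_imp_finite_preorder_on:
  "poset_on Om le \<Longrightarrow> Y \<subseteq> Om \<Longrightarrow> finite_preorder_on le Y"
  unfolding poset_on_def finite_preorder_on_def reflp_on_def transp_on_def
  by (meson finite_subset subsetD)

theorem theorem3p2:
  fixes Om :: "'a set" and le :: "'a \<Rightarrow> 'a \<Rightarrow> bool"
    and tau eta :: "'a \<Rightarrow> 'b::comm_ring_1" and Y :: "'a set"
  assumes "poset_on Om le"
    and "\<And>i. i \<in> Om \<Longrightarrow> eta i = tau i - 1"
    and "Y \<subseteq> Om"
  shows "(\<forall>D. D \<subseteq> maxel le Y \<longrightarrow>
           pi_poly le tau eta Y D =
             (\<Sum>A | A \<subseteq> D. (-1) ^ card A *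
                (\<Prod>i\<in>gen le Y A. [:0, tau i:]) * pi_poly le tau eta (Y - gen le Y A) {})) \<and>
         (\<forall>D. D \<subseteq> maxel le Y \<longrightarrow>
           (\<Prod>i\<in>gen le Y D. [:0, tau i:]) * pi_poly le tau eta (Y - gen le Y D) {} =
             (\<Sum>A | A \<subseteq> D. (-1) ^ card A * pi_poly le tau eta Y A))"
proof -
  interpret finite_preorder_on le Y
    using assms(1,3) by (rule poset_on_imp_finite_preorder_on)
  have "\<forall>i\<in>D. eta i = tau i - 1" if "D \<subseteq> maxel le Y" for D
    using that maxel_subset[of le Y] assms(2,3) by blast
  then show ?thesis
    by (simp add: pi_poly_eq_alternating_sum prod_gen_pi_poly_eq_alternating_sum)
qed

end
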